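(* Let $\alpha\in(0,\infty)^T$ and $u_t(x)=\frac{1}{\alpha_t}[1-\exp(-\alpha_t x)]$, $t\in\mathbb{T}$. For $x\in\mathbb{R}$ and $Z\in L^\infty$, let $(X_t)\in\mathcal{A}(x-Z)$ be the optimal intertemporal allocation of $x-Z$, i.e. $\sum_{t\in\mathbb{T}}E[u_t(\tilde X_t)]=U(x-Z)$. Then $X_1=\frac{B_1}{\alpha_1}[\beta_1x-\log L_1(\alpha,-Z)]$ and, for $t=2,\dots,T$, $X_t=\frac{B_t}{\alpha_t}\Big[\beta_1x-\log L_t(\alpha,-Z)+\sum_{k=1}^{t-1}\frac{\beta_{k+1}}{\alpha_k}\log L_k(\alpha,-Z)\Big]$.
   Context: Let $T\ge 1$ be an integer and $\mathbb{T}=\{1,\dots,T\}$. Let $(\Omega,\mathcal{F},(\mathcal{F}_t)_{t\in\{0,1,\dots,T\}},P)$ be a filtered probability space and $L^{\infty}=L^{\infty}(\Omega,\mathcal{F}_T,P)$; write $E_t[Y]=E[Y\mid\mathcal{F}_t]$. Let $(r_t)_{t\in\mathbb{T}}$ be a bounded, nonnegative, predictable process, $B_0=1$, $B_t=\prod_{k=1}^t(1+r_k)$, and $\tilde X_t=X_t/B_t$. For $W\in L^\infty$, $\mathcal{A}(W)$ is the set of $(\mathcal{F}_t)$-adapted processes $(Y_t)_{t\in\mathbb{T}}$ with $Y_t\in L^\infty$ and $\sum_{t\in\mathbb{T}}\tilde Y_t=W$ a.s., and $U(W)=\sup\{\sum_{t\in\mathbb{T}}E[u_t(\tilde Y_t)]:(Y_t)\in\mathcal{A}(W)\}$.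 For $\alpha\in(0,\infty)^T$ define $\beta_t$ by $1/\beta_t=\sum_{k=t}^T 1/\alpha_k$. For $W\in L^\infty$ define $L_T(\alpha,W)=\exp(-\alpha_T W)$ and $L_{t-1}(\alpha,W)=E_{t-1}[L_t(\alpha,W)]^{\beta_{t-1}/\beta_t}$ for $t=2,\dots,T$. *)

theory Defs
  imports "HOL-Probability.Probability"
begin

definition filtration_upto :: "'a measure \<Rightarrow> (nat \<Rightarrow> 'a measure) \<Rightarrow> nat \<Rightarrow> bool" where
  "filtration_upto M F T \<longleftrightarrow>
     (\<forall>t\<le>T. subalgebra M (F t)) \<and> (\<forall>s t. s \<le> t \<and> t \<le> T \<longrightarrow> sets (F s) \<subseteq> sets (F t))"

definition Linf :: "'a measure \<Rightarrow> 'a measure \<Rightarrow> ('a \<Rightarrow> real) \<Rightarrow> bool" where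
  "Linf M G Y \<longleftrightarrow> Y \<in> borel_measurable G \<and> (\<exists>C. AE \<omega> in M. \<bar>Y \<omega>\<bar> \<le> C)"

definition bank :: "(nat \<Rightarrow> 'a \<Rightarrow> real) \<Rightarrow> nat \<Rightarrow> 'a \<Rightarrow> real" where
  "bank r t \<omega> = (\<Prod>k\<in>{1..t}. 1 + r k \<omega>)"

definition disc :: "(nat \<Rightarrow> 'a \<Rightarrow> real) \<Rightarrow> (nat \<Rightarrow> 'a \<Rightarrow> real) \<Rightarrow> nat \<Rightarrow> 'a \<Rightarrow> real" where
  "disc r X t \<omega> = X t \<omega> / bank r t \<omega>"

definition adm :: "'a measure \<Rightarrow> (nat \<Rightarrow> 'a measure) \<Rightarrow> nat \<Rightarrow> (nat \<Rightarrow> 'a \<Rightarrow> real)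
    \<Rightarrow> ('a \<Rightarrow> real) \<Rightarrow> (nat \<Rightarrow> 'a \<Rightarrow> real) set" where
  "adm M F T r W = {Y. (\<forall>t\<in>{1..T}. Y t \<in> borel_measurable (F t) \<and> Linf M (F T) (Y t))
      \<and> (AE \<omega> in M. (\<Sum>t\<in>{1..T}. disc r Y t \<omega>) = W \<omega>)}"

definition Uval :: "'a measure \<Rightarrow> (nat \<Rightarrow> 'a measure) \<Rightarrow> nat \<Rightarrow> (nat \<Rightarrow> 'a \<Rightarrow> real)
    \<Rightarrow> (nat \<Rightarrow> real \<Rightarrow> real) \<Rightarrow> ('a \<Rightarrow> real) \<Rightarrow> real" where
  "Uval M F T r u W = Sup {(\<Sum>t\<in>{1..T}. integral\<^sup>L M (\<lambda>\<omega>. u t (disc r Y t \<omega>))) | Y. Y \<in> adm M F T r W}"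

definition exp_util :: "(nat \<Rightarrow> real) \<Rightarrow> nat \<Rightarrow> real \<Rightarrow> real" where
  "exp_util \<alpha> t x = (1 - exp (- \<alpha> t * x)) / \<alpha> t"

definition beta :: "(nat \<Rightarrow> real) \<Rightarrow> nat \<Rightarrow> nat \<Rightarrow> real" where
  "beta \<alpha> T t = 1 / (\<Sum>k\<in>{t..T}. 1 / \<alpha> k)"

text \<open>Auxiliary: Lrec n = L_{T-n}(alpha, W).\<close>
fun Lrec :: "'a measure \<Rightarrow> (nat \<Rightarrow> 'a measure) \<Rightarrow> nat \<Rightarrow> (nat \<Rightarrow> real) \<Rightarrow> ('a \<Rightarrow> real)
    \<Rightarrow> nat \<Rightarrow> 'a \<Rightarrow> real" where
  "Lrec M F T \<alpha> W 0 = (\<lambda>\<omega>. exp (- \<alpha> T * W \<omega>))"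
| "Lrec M F T \<alpha> W (Suc n) = (\<lambda>\<omega>.
     (real_cond_exp M (F (T - Suc n)) (Lrec M F T \<alpha> W n) \<omega>)
       powr (beta \<alpha> T (T - Suc n) / beta \<alpha> T (T - n)))"

definition Lfun :: "'a measure \<Rightarrow> (nat \<Rightarrow> 'a measure) \<Rightarrow> nat \<Rightarrow> (nat \<Rightarrow> real) \<Rightarrow> ('a \<Rightarrow> real)
    \<Rightarrow> nat \<Rightarrow> 'a \<Rightarrow> real" where
  "Lfun M F T \<alpha> W t = Lrec M F T \<alpha> W (T - t)"

end

theory Submission
  imports Defs
begin

(*
  Write y_t = X_t / B_t.  The candidate optimum is y*_t = (c_t - log L_t) / alpha_t with
  c_t = beta_1 x + sum_{k<t} beta_{k+1}/alpha_k log L_k; it is F_t-measurable and bounded.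
  (1) Budget: sum_t y*_t = x - Z, by backward induction on the tail sums
      sum_{t>=s} y*_t = c_s / beta_s - Z.
  (2) Martingale property: the marginal utility D_t = u_t'(y*_t) = exp(log L_t - c_t) satisfies
      E[h D_{t+1}] = E[h D_t] for bounded F_t-measurable h, since L_t = E_t[L_{t+1}]^{beta_t/beta_{t+1}};
      hence E[h D_t] = E[h D_T], and with (1) sum_t E[(y_t - y*_t) D_t] = 0 for admissible y.
  (3) The tangent inequality u_t(y_t) <= u_t(y*_t) + D_t (y_t - y*_t), strict unless y_t = y*_t,
      then shows y* is optimal and that every optimal y equals y* almost surely.
*)

section \<open>Essentially bounded functions\<close>

definition ess_bounded :: "'a measure \<Rightarrow> ('a \<Rightarrow> real) \<Rightarrow> bool" where
  "ess_bounded M f \<longleftrightarrow> (\<exists>C. AE \<omega> in M. \<bar>f \<omega>\<bar> \<le> C)"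

definition pos_bounded :: "'a measure \<Rightarrow> ('a \<Rightarrow> real) \<Rightarrow> bool" where
  "pos_bounded M f \<longleftrightarrow> (\<exists>a b. 0 < a \<and> (AE \<omega> in M. a \<le> f \<omega> \<and> f \<omega> \<le> b))"

lemma Linf_iff: "Linf M G f \<longleftrightarrow> f \<in> borel_measurable G \<and> ess_bounded M f"
  unfolding Linf_def ess_bounded_def ..

lemma ess_boundedI: "AE \<omega> in M. \<bar>f \<omega>\<bar> \<le> C \<Longrightarrow> ess_bounded M f"
  unfolding ess_bounded_def by blast

lemma ess_bounded_const [simp]: "ess_bounded M (\<lambda>_. c)"
  by (rule ess_boundedI[where C = "\<bar>c\<bar>"]) simp

lemma ess_bounded_add:
  assumes "ess_bounded M f" "ess_bounded M g"
  shows "ess_bounded M (\<lambda>\<omega>. f \<omega> + g \<omega>)"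
proof -
  obtain C D where "AE \<omega> in M. \<bar>f \<omega>\<bar> \<le> C" "AE \<omega> in M. \<bar>g \<omega>\<bar> \<le> D"
    using assms unfolding ess_bounded_def by blast
  then have "AE \<omega> in M. \<bar>f \<omega> + g \<omega>\<bar> \<le> C + D" by eventually_elim auto
  then show ?thesis by (rule ess_boundedI)
qed

lemma ess_bounded_mult:
  assumes "ess_bounded M f" "ess_bounded M g"
  shows "ess_bounded M (\<lambda>\<omega>. f \<omega> * g \<omega>)"
proof -
  obtain C D where "AE \<omega> in M. \<bar>f \<omega>\<bar> \<le> C" "AE \<omega> in M. \<bar>g \<omega>\<bar> \<le> D"
    using assms unfolding ess_bounded_def by blast
  then have "AE \<omega> in M. \<bar>f \<omega> * g \<omega>\<bar> \<le> C * D"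
    by eventually_elim (simp add: abs_mult mult_mono')
  then show ?thesis by (rule ess_boundedI)
qed

lemma ess_bounded_minus: "ess_bounded M f \<Longrightarrow> ess_bounded M (\<lambda>\<omega>. - f \<omega>)"
  unfolding ess_bounded_def by simp

lemma ess_bounded_diff:
  "ess_bounded M f \<Longrightarrow> ess_bounded M g \<Longrightarrow> ess_bounded M (\<lambda>\<omega>. f \<omega> - g \<omega>)"
  using ess_bounded_add[OF _ ess_bounded_minus, of M f g] by simp

lemma ess_bounded_cmult: "ess_bounded M f \<Longrightarrow> ess_bounded M (\<lambda>\<omega>. c * f \<omega>)"
  using ess_bounded_mult[of M "\<lambda>_. c" f] by simp

lemma ess_bounded_sum:
  "finite S \<Longrightarrow> (\<And>i. i \<in> S \<Longrightarrow> ess_bounded M (f i)) \<Longrightarrow> ess_bounded M (\<lambda>\<omega>. \<Sum>i\<in>S. f i \<omega>)"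
  by (induction S rule: finite_induct) (auto intro!: ess_bounded_add)

lemma pos_bounded_exp: "ess_bounded M f \<Longrightarrow> pos_bounded M (\<lambda>\<omega>. exp (f \<omega>))"
proof -
  assume "ess_bounded M f"
  then obtain C where "AE \<omega> in M. \<bar>f \<omega>\<bar> \<le> C" unfolding ess_bounded_def by blast
  then have "AE \<omega> in M. exp (- C) \<le> exp (f \<omega>) \<and> exp (f \<omega>) \<le> exp C" by eventually_elim auto
  then show ?thesis unfolding pos_bounded_def by (intro exI conjI) auto
qed

lemma pos_bounded_AE_pos: "pos_bounded M f \<Longrightarrow> AE \<omega> in M. 0 < f \<omega>"
  unfolding pos_bounded_def by (auto elim!: eventually_mono)

lemma pos_bounded_ess_bounded: "pos_bounded M f \<Longrightarrow> ess_bounded M f"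
proof -
  assume "pos_bounded M f"
  then obtain a b where a: "0 < a" and ab: "AE \<omega> in M. a \<le> f \<omega> \<and> f \<omega> \<le> b"
    unfolding pos_bounded_def by blast
  from ab have "AE \<omega> in M. \<bar>f \<omega>\<bar> \<le> b" by eventually_elim (use a in auto)
  then show ?thesis by (rule ess_boundedI)
qed

lemma ess_bounded_exp: "ess_bounded M f \<Longrightarrow> ess_bounded M (\<lambda>\<omega>. exp (f \<omega>))"
  using pos_bounded_exp pos_bounded_ess_bounded by blast

lemma pos_bounded_ln: "pos_bounded M f \<Longrightarrow> ess_bounded M (\<lambda>\<omega>. ln (f \<omega>))"
proof -
  assume "pos_bounded M f"
  then obtain a b where a: "0 < a" and ab: "AE \<omega> in M. a \<le> f \<omega> \<and> f \<omega> \<le> b"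
    unfolding pos_bounded_def by blast
  from ab have "AE \<omega> in M. \<bar>ln (f \<omega>)\<bar> \<le> \<bar>ln a\<bar> + \<bar>ln b\<bar>"
  proof eventually_elim
    case (elim \<omega>)
    then have "ln a \<le> ln (f \<omega>)" "ln (f \<omega>) \<le> ln b" using a by auto
    then show ?case by linarith
  qed
  then show ?thesis by (rule ess_boundedI)
qed

lemma pos_bounded_powr:
  assumes "pos_bounded M f" "0 \<le> p"
  shows "pos_bounded M (\<lambda>\<omega>. f \<omega> powr p)"
proof -
  obtain a b where a: "0 < a" and ab: "AE \<omega> in M. a \<le> f \<omega> \<and> f \<omega> \<le> b"
    using assms(1) unfolding pos_bounded_def by blast
  from ab have "AE \<omega> in M. a powr p \<le> f \<omega> powr p \<and> f \<omega> powr p \<le> b powr p"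
    by eventually_elim (use a assms(2) in \<open>auto intro!: powr_mono2\<close>)
  then show ?thesis unfolding pos_bounded_def using a by (intro exI[of _ "a powr p"] exI[of _ "b powr p"]) auto
qed

lemma pos_bounded_cond_exp:
  assumes "sigma_finite_subalgebra M G" "integrable M f" "pos_bounded M f"
  shows "pos_bounded M (real_cond_exp M G f)"
proof -
  interpret sigma_finite_subalgebra M G by fact
  obtain a b where a: "0 < a" and ab: "AE \<omega> in M. a \<le> f \<omega> \<and> f \<omega> \<le> b"
    using assms(3) unfolding pos_bounded_def by blast
  have "AE \<omega> in M. a \<le> real_cond_exp M G f \<omega>"
    by (rule real_cond_exp_ge_c[OF assms(2)]) (use ab in auto)
  moreover have "AE \<omega> in M. real_cond_exp M G f \<omega> \<le> b"
    by (rule real_cond_exp_le_c[OF assms(2)]) (use ab in auto)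
  ultimately have "AE \<omega> in M. a \<le> real_cond_exp M G f \<omega> \<and> real_cond_exp M G f \<omega> \<le> b"
    by eventually_elim auto
  then show ?thesis unfolding pos_bounded_def using a by blast
qed

lemma integrable_ess_bounded:
  assumes "finite_measure M" "f \<in> borel_measurable M" "ess_bounded M f"
  shows "integrable M f"
proof -
  interpret finite_measure M by fact
  obtain C where "AE \<omega> in M. \<bar>f \<omega>\<bar> \<le> C" using assms(3) unfolding ess_bounded_def by blast
  then show ?thesis using assms(2) by (intro integrable_const_bound[where B = C]) auto
qed

lemma filtration_subalgebra: "filtration_upto M F T \<Longrightarrow> t \<le> T \<Longrightarrow> subalgebra M (F t)"
  unfolding filtration_upto_def by auto

lemma filtration_measurable_mono:
  assumes "filtration_upto M F T" "s \<le> t" "t \<le> T" "f \<in> borel_measurable (F s)"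
  shows "f \<in> borel_measurable (F t)"
proof -
  have "subalgebra (F t) (F s)"
    using assms filtration_subalgebra[OF assms(1), of s] filtration_subalgebra[OF assms(1), of t]
    unfolding filtration_upto_def subalgebra_def by auto
  then show ?thesis using measurable_from_subalg assms(4) by blast
qed

lemma filtration_measurable_M:
  "filtration_upto M F T \<Longrightarrow> t \<le> T \<Longrightarrow> f \<in> borel_measurable (F t) \<Longrightarrow> f \<in> borel_measurable M"
  using filtration_subalgebra measurable_from_subalg by blast

lemma filtration_sigma_finite:
  assumes "finite_measure M" "filtration_upto M F T" "t \<le> T"
  shows "sigma_finite_subalgebra M (F t)"
proof (rule finite_measure_subalgebra_is_sigma_finite)
  show "finite_measure_subalgebra M (F t)"
    unfolding finite_measure_subalgebra_def finite_measure_subalgebra_axioms_def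
    using filtration_subalgebra[OF assms(2,3)] assms(1) by (auto simp: finite_measure_def)
qed

section \<open>Exponential utility\<close>

text \<open>Tangent inequality for the strictly concave utility u_t, with equality only at the
  point of tangency; exp (- alpha_t z) is the marginal utility u_t'(z).\<close>
lemma exp_util_tangent:
  assumes "0 < \<alpha> t"
  shows "exp_util \<alpha> t y \<le> exp_util \<alpha> t z + exp (- \<alpha> t * z) * (y - z)"
    and "exp_util \<alpha> t y = exp_util \<alpha> t z + exp (- \<alpha> t * z) * (y - z) \<Longrightarrow> y = z"
proof -
  define s where "s = \<alpha> t * (y - z)"
  have gap: "exp_util \<alpha> t z + exp (- \<alpha> t * z) * (y - z) - exp_util \<alpha> t y
      = exp (- \<alpha> t * z) / \<alpha> t * (exp (- s) - (1 - s))"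
  proof -
    have "exp (- \<alpha> t * y) = exp (- \<alpha> t * z) * exp (- s)"
      unfolding s_def by (simp add: algebra_simps flip: exp_add)
    then show ?thesis unfolding exp_util_def s_def using assms by (simp add: field_simps)
  qed
  have "0 \<le> exp (- s) - (1 - s)" using exp_minus_ge[of s] by linarith
  with assms have "0 \<le> exp (- \<alpha> t * z) / \<alpha> t * (exp (- s) - (1 - s))" by simp
  then show "exp_util \<alpha> t y \<le> exp_util \<alpha> t z + exp (- \<alpha> t * z) * (y - z)"
    using gap by linarith
  assume eq: "exp_util \<alpha> t y = exp_util \<alpha> t z + exp (- \<alpha> t * z) * (y - z)"
  show "y = z"
  proof (rule ccontr)
    assume "y \<noteq> z"
    then have "0 < exp (- s) - (1 - s)" using assms exp_minus_greater[of s] unfolding s_def by simp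
    with assms have "0 < exp (- \<alpha> t * z) / \<alpha> t * (exp (- s) - (1 - s))" by simp
    then show False using gap eq by linarith
  qed
qed

lemma borel_measurable_exp_util [measurable]:
  assumes [measurable]: "f \<in> borel_measurable N"
  shows "(\<lambda>\<omega>. exp_util \<alpha> t (f \<omega>)) \<in> borel_measurable N"
  unfolding exp_util_def by measurable

lemma ess_bounded_exp_util: "ess_bounded M f \<Longrightarrow> ess_bounded M (\<lambda>\<omega>. exp_util \<alpha> t (f \<omega>))"
  unfolding exp_util_def divide_inverse
  by (intro ess_bounded_mult ess_bounded_diff ess_bounded_const ess_bounded_exp ess_bounded_cmult)

text \<open>Utilities are bounded above by 1/alpha_t, so the value function is a finite supremum.\<close>
lemma integral_exp_util_le:
  assumes "prob_space M" "0 < \<alpha> t"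
  shows "integral\<^sup>L M (\<lambda>\<omega>. exp_util \<alpha> t (f \<omega>)) \<le> 1 / \<alpha> t"
proof (cases "integrable M (\<lambda>\<omega>. exp_util \<alpha> t (f \<omega>))")
  case True
  interpret prob_space M by fact
  have "integral\<^sup>L M (\<lambda>\<omega>. exp_util \<alpha> t (f \<omega>)) \<le> integral\<^sup>L M (\<lambda>\<omega>. 1 / \<alpha> t)"
    using True assms(2) by (intro integral_mono) (auto simp: exp_util_def divide_right_mono)
  then show ?thesis by (simp add: prob_space)
next
  case False
  then show ?thesis using assms(2) by (simp add: not_integrable_integral_eq)
qed

lemma beta_pos: "(\<And>k. k \<in> {t..T} \<Longrightarrow> 0 < \<alpha> k) \<Longrightarrow> t \<le> T \<Longrightarrow> 0 < beta \<alpha> T t"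
  unfolding beta_def by (auto intro!: sum_pos)

lemma beta_last: "beta \<alpha> T T = \<alpha> T"
  unfolding beta_def by simp

lemma beta_Suc: "t < T \<Longrightarrow> 1 / beta \<alpha> T t = 1 / \<alpha> t + 1 / beta \<alpha> T (Suc t)"
  unfolding beta_def by (simp add: sum.atLeast_Suc_atMost)

lemma Lrec_pos_bounded:
  assumes "prob_space M" "filtration_upto M F T" "\<And>t. t \<in> {1..T} \<Longrightarrow> 0 < \<alpha> t"
    and "Linf M (F T) W" "n < T"
  shows "Lrec M F T \<alpha> W n \<in> borel_measurable (F (T - n)) \<and> pos_bounded M (Lrec M F T \<alpha> W n)"
  using assms(5)
proof (induction n)
  case 0
  have [measurable]: "W \<in> borel_measurable (F T)" using assms(4) by (simp add: Linf_iff)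
  have "pos_bounded M (\<lambda>\<omega>. exp (- \<alpha> T * W \<omega>))"
    using assms(4) by (intro pos_bounded_exp ess_bounded_cmult) (simp add: Linf_iff)
  then show ?case by simp
next
  case (Suc n)
  let ?G = "F (T - Suc n)" and ?L = "Lrec M F T \<alpha> W n"
  have fin: "finite_measure M" using assms(1) by (simp add: prob_space_def)
  have Lmeas: "?L \<in> borel_measurable M" and Lbd: "pos_bounded M ?L"
    using Suc filtration_measurable_M[OF assms(2), of "T - n"] by auto
  have "pos_bounded M (real_cond_exp M ?G ?L)"
    using filtration_sigma_finite[OF fin assms(2)] Lbd
    by (intro pos_bounded_cond_exp integrable_ess_bounded[OF fin Lmeas] pos_bounded_ess_bounded) auto
  moreover have "0 \<le> beta \<alpha> T (T - Suc n) / beta \<alpha> T (T - n)"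
    using beta_pos[of "T - Suc n" T \<alpha>] beta_pos[of "T - n" T \<alpha>] assms(3) Suc.prems by force
  ultimately have "pos_bounded M (Lrec M F T \<alpha> W (Suc n))" by (simp add: pos_bounded_powr)
  then show ?case by simp
qed

locale exp_utility_model = prob_space M for M :: "'a measure" +
  fixes F :: "nat \<Rightarrow> 'a measure" and T :: nat and r :: "nat \<Rightarrow> 'a \<Rightarrow> real"
    and \<alpha> :: "nat \<Rightarrow> real" and Z :: "'a \<Rightarrow> real" and x :: real
  assumes T_pos: "1 \<le> T"
    and filtration: "filtration_upto M F T"
    and r_predictable: "\<forall>t\<in>{1..T}. r t \<in> borel_measurable (F (t - 1))"
    and r_bounded: "\<exists>C. \<forall>t\<in>{1..T}. AE \<omega> in M. 0 \<le> r t \<omega> \<and> r t \<omega> \<le> C"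
    and alpha_pos_all: "\<forall>t\<in>{1..T}. \<alpha> t > 0"
    and Z_Linf: "Linf M (F T) Z"
begin

lemma alpha_pos: "t \<in> {1..T} \<Longrightarrow> 0 < \<alpha> t"
  using alpha_pos_all by blast

lemma beta_positive: "t \<in> {1..T} \<Longrightarrow> 0 < beta \<alpha> T t"
  using alpha_pos by (intro beta_pos) auto

lemma measurable_M: "t \<le> T \<Longrightarrow> f \<in> borel_measurable (F t) \<Longrightarrow> f \<in> borel_measurable M"
  using filtration_measurable_M[OF filtration] .

lemma measurable_mono: "s \<le> t \<Longrightarrow> t \<le> T \<Longrightarrow> f \<in> borel_measurable (F s) \<Longrightarrow> f \<in> borel_measurable (F t)"
  using filtration_measurable_mono[OF filtration] .

lemma integrable_adapted:
  "t \<le> T \<Longrightarrow> f \<in> borel_measurable (F t) \<Longrightarrow> ess_bounded M f \<Longrightarrow> integrable M f"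
  using integrable_ess_bounded[OF finite_measure_axioms] measurable_M by blast

subsection \<open>The candidate optimum\<close>

definition L :: "nat \<Rightarrow> 'a \<Rightarrow> real" where
  "L t = Lfun M F T \<alpha> (\<lambda>\<omega>. - Z \<omega>) t"

definition logL :: "nat \<Rightarrow> 'a \<Rightarrow> real" where
  "logL t \<omega> = ln (L t \<omega>)"

definition level :: "nat \<Rightarrow> 'a \<Rightarrow> real" where
  "level t \<omega> = beta \<alpha> T 1 * x + (\<Sum>k\<in>{1..t-1}. beta \<alpha> T (k + 1) / \<alpha> k * logL k \<omega>)"

definition opt :: "nat \<Rightarrow> 'a \<Rightarrow> real" where
  "opt t \<omega> = (level t \<omega> - logL t \<omega>) / \<alpha> t"

definition marg :: "nat \<Rightarrow> 'a \<Rightarrow> real" where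
  "marg t \<omega> = exp (- \<alpha> t * opt t \<omega>)"

lemma L_regular: "t \<in> {1..T} \<Longrightarrow> L t \<in> borel_measurable (F t) \<and> pos_bounded M (L t)"
proof -
  assume t: "t \<in> {1..T}"
  have "Linf M (F T) (\<lambda>\<omega>. - Z \<omega>)"
    using Z_Linf unfolding Linf_iff by (auto intro: ess_bounded_minus)
  moreover have "T - t < T" "T - (T - t) = t" using t T_pos by auto
  ultimately show ?thesis
    using Lrec_pos_bounded[OF prob_space_axioms filtration alpha_pos, where n = "T - t"]
    by (simp add: L_def Lfun_def)
qed

lemma L_last: "L T = (\<lambda>\<omega>. exp (\<alpha> T * Z \<omega>))"
  unfolding L_def Lfun_def by simp

lemma L_step:
  assumes "t < T"
  shows "L t = (\<lambda>\<omega>. real_cond_exp M (F t) (L (Suc t)) \<omega> powr (beta \<alpha> T t / beta \<alpha> T (Suc t)))"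
proof -
  have "T - t = Suc (T - Suc t)" "T - Suc (T - Suc t) = t" "T - (T - Suc t) = Suc t"
    using assms by auto
  then show ?thesis unfolding L_def Lfun_def by simp
qed

lemma logL_measurable: "t \<in> {1..T} \<Longrightarrow> logL t \<in> borel_measurable (F t)"
  unfolding logL_def using L_regular[THEN conjunct1] by measurable

lemma logL_bounded: "t \<in> {1..T} \<Longrightarrow> ess_bounded M (logL t)"
  unfolding logL_def using L_regular pos_bounded_ln by blast

lemma level_measurable:
  assumes "t \<le> Suc s" "s \<le> T"
  shows "level t \<in> borel_measurable (F s)"
proof -
  have "logL k \<in> borel_measurable (F s)" if "k \<in> {1..t-1}" for k
  proof -
    have "k \<le> s" "k \<in> {1..T}" using that assms by auto
    then show ?thesis using measurable_mono[of k s] logL_measurable[of k] assms by auto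
  qed
  then show ?thesis unfolding level_def by measurable
qed

lemma level_bounded: "t \<le> T \<Longrightarrow> ess_bounded M (level t)"
  unfolding level_def
  by (intro ess_bounded_add ess_bounded_const ess_bounded_sum ess_bounded_cmult logL_bounded) auto

lemma level_Suc: "1 \<le> t \<Longrightarrow> level (Suc t) \<omega> = level t \<omega> + beta \<alpha> T (Suc t) / \<alpha> t * logL t \<omega>"
proof -
  assume "1 \<le> t"
  then have "{1..Suc t - 1} = insert t {1..t-1}" "t \<notin> {1..t-1}" by auto
  then show ?thesis unfolding level_def by (simp add: algebra_simps)
qed

lemma opt_measurable: "t \<in> {1..T} \<Longrightarrow> opt t \<in> borel_measurable (F t)"
  using level_measurable[of t t] logL_measurable[of t] unfolding opt_def by measurable

lemma opt_bounded: "t \<in> {1..T} \<Longrightarrow> ess_bounded M (opt t)"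
  unfolding opt_def divide_inverse
  by (auto intro!: ess_bounded_mult ess_bounded_diff level_bounded logL_bounded)

lemma marg_measurable: "t \<in> {1..T} \<Longrightarrow> marg t \<in> borel_measurable (F t)"
  unfolding marg_def using opt_measurable by measurable

lemma marg_bounded: "t \<in> {1..T} \<Longrightarrow> ess_bounded M (marg t)"
  unfolding marg_def
  by (intro ess_bounded_exp ess_bounded_cmult ess_bounded_minus opt_bounded)

subsection \<open>The budget constraint\<close>

lemma opt_tail_sum:
  assumes "s \<in> {1..T}"
  shows "(\<Sum>t\<in>{s..T}. opt t \<omega>) = level s \<omega> / beta \<alpha> T s - Z \<omega>"
  using assms
proof (induction "T - s" arbitrary: s)
  case 0
  then have "s = T" by auto
  then show ?case
    using alpha_pos[of T] T_pos by (simp add: opt_def beta_last logL_def L_last diff_divide_distrib)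
next
  case (Suc m)
  then have s: "1 \<le> s" "s < T" and IH: "(\<Sum>t\<in>{Suc s..T}. opt t \<omega>) = level (Suc s) \<omega> / beta \<alpha> T (Suc s) - Z \<omega>"
    by auto
  have pos: "0 < \<alpha> s" "0 < beta \<alpha> T (Suc s)" using alpha_pos beta_positive s by auto
  have "(\<Sum>t\<in>{s..T}. opt t \<omega>) = opt s \<omega> + (\<Sum>t\<in>{Suc s..T}. opt t \<omega>)"
    using s by (simp add: sum.atLeast_Suc_atMost)
  also have "\<dots> = opt s \<omega> + level (Suc s) \<omega> / beta \<alpha> T (Suc s) - Z \<omega>"
    using IH by simp
  also have "\<dots> = level s \<omega> * (1 / \<alpha> s + 1 / beta \<alpha> T (Suc s)) - Z \<omega>"
    unfolding level_Suc[OF s(1)] opt_def using pos by (simp add: field_simps)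
  also have "\<dots> = level s \<omega> / beta \<alpha> T s - Z \<omega>"
    by (simp flip: beta_Suc[OF s(2)])
  finally show ?case .
qed

lemma opt_budget: "(\<Sum>t\<in>{1..T}. opt t \<omega>) = x - Z \<omega>"
  using opt_tail_sum[of 1 \<omega>] beta_positive[of 1] T_pos by (simp add: level_def)

subsection \<open>Marginal utility is a martingale\<close>

lemma marg_eq: "t \<in> {1..T} \<Longrightarrow> marg t \<omega> = exp (logL t \<omega> - level t \<omega>)"
  unfolding marg_def opt_def using alpha_pos[of t] by (simp add: field_simps)

lemma marg_eq_L: "t \<in> {1..T} \<Longrightarrow> AE \<omega> in M. marg t \<omega> = exp (- level t \<omega>) * L t \<omega>"
  using pos_bounded_AE_pos[of M "L t"] L_regular[of t]
  by (auto elim!: eventually_mono simp: marg_eq logL_def exp_diff exp_minus field_simps)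

text \<open>The recursion for L turns D_t into the conditional expectation of D_(t+1) given F_t,
  up to the F_t-measurable factor exp (- c_(t+1)).\<close>
lemma marg_cond_exp:
  assumes t: "1 \<le> t" "t < T"
  shows "AE \<omega> in M. marg t \<omega> = exp (- level (Suc t) \<omega>) * real_cond_exp M (F t) (L (Suc t)) \<omega>"
proof -
  let ?E = "real_cond_exp M (F t) (L (Suc t))"
  define p where "p = beta \<alpha> T t / beta \<alpha> T (Suc t)"
  have pos: "0 < \<alpha> t" "0 < beta \<alpha> T t" "0 < beta \<alpha> T (Suc t)"
    using alpha_pos beta_positive t by auto
  have "(beta \<alpha> T (Suc t) / \<alpha> t + 1) * p = beta \<alpha> T t * (1 / \<alpha> t + 1 / beta \<alpha> T (Suc t))"
    using pos unfolding p_def by (simp add: field_simps)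
  also have "\<dots> = 1" using pos by (simp flip: beta_Suc[OF t(2)])
  finally have exponent: "(beta \<alpha> T (Suc t) / \<alpha> t + 1) * p = 1" .
  have "pos_bounded M ?E"
    using L_regular[of "Suc t"] t filtration_sigma_finite[OF finite_measure_axioms filtration, of t]
    by (intro pos_bounded_cond_exp integrable_adapted[of "Suc t"] pos_bounded_ess_bounded) auto
  then show ?thesis
  proof (rule pos_bounded_AE_pos[THEN eventually_mono])
    fix \<omega> assume E: "0 < ?E \<omega>"
    have "logL t \<omega> = p * ln (?E \<omega>)" unfolding logL_def L_step[OF t(2)] p_def using E by simp
    then have "logL t \<omega> - level t \<omega>
        = - level (Suc t) \<omega> + (beta \<alpha> T (Suc t) / \<alpha> t + 1) * p * ln (?E \<omega>)"
      unfolding level_Suc[OF t(1)] by (simp add: algebra_simps)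
    then have "logL t \<omega> - level t \<omega> = - level (Suc t) \<omega> + ln (?E \<omega>)"
      using exponent by simp
    then have "marg t \<omega> = exp (- level (Suc t) \<omega> + ln (?E \<omega>))"
      using t by (simp add: marg_eq)
    then show "marg t \<omega> = exp (- level (Suc t) \<omega>) * ?E \<omega>"
      using E by (simp only: exp_add exp_ln)
  qed
qed

lemma marg_step:
  assumes t: "1 \<le> t" "t < T" and h: "h \<in> borel_measurable (F t)" "ess_bounded M h"
  shows "(\<integral>\<omega>. h \<omega> * marg (Suc t) \<omega> \<partial>M) = (\<integral>\<omega>. h \<omega> * marg t \<omega> \<partial>M)"
proof -
  interpret G: sigma_finite_subalgebra M "F t"
    using filtration_sigma_finite[OF finite_measure_axioms filtration] t by simp
  define f where "f \<omega> = h \<omega> * exp (- level (Suc t) \<omega>)" for \<omega>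
  have [measurable]: "level (Suc t) \<in> borel_measurable (F t)" "level (Suc t) \<in> borel_measurable M"
    "h \<in> borel_measurable M"
    "L (Suc t) \<in> borel_measurable M" "marg t \<in> borel_measurable M" "marg (Suc t) \<in> borel_measurable M"
    using level_measurable[of "Suc t" t] measurable_M[OF _ level_measurable[of "Suc t" t]]
      measurable_M[OF _ h(1)]
      measurable_M[OF _ conjunct1[OF L_regular[of "Suc t"]]]
      measurable_M[OF _ marg_measurable[of t]] measurable_M[OF _ marg_measurable[of "Suc t"]] t
    by auto
  have f: "f \<in> borel_measurable (F t)" "ess_bounded M f"
    unfolding f_def using h level_bounded[of "Suc t"] t
    by (auto intro!: ess_bounded_mult ess_bounded_exp ess_bounded_minus)
  have "f \<in> borel_measurable (F (Suc t))" "L (Suc t) \<in> borel_measurable (F (Suc t))"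
    using measurable_mono[OF _ _ f(1), of "Suc t"] L_regular[of "Suc t"] t by auto
  then have "integrable M (\<lambda>\<omega>. f \<omega> * L (Suc t) \<omega>)"
    using L_regular[of "Suc t"] t
    by (intro integrable_adapted[of "Suc t"] ess_bounded_mult[OF f(2) pos_bounded_ess_bounded]) auto
  then have cond: "(\<integral>\<omega>. f \<omega> * real_cond_exp M (F t) (L (Suc t)) \<omega> \<partial>M) = (\<integral>\<omega>. f \<omega> * L (Suc t) \<omega> \<partial>M)"
    using G.real_cond_exp_intg(2) f(1) by simp
  have "(\<integral>\<omega>. h \<omega> * marg (Suc t) \<omega> \<partial>M) = (\<integral>\<omega>. f \<omega> * L (Suc t) \<omega> \<partial>M)"
    using marg_eq_L[of "Suc t"] t f(1) measurable_M[OF _ f(1)]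
    by (intro integral_cong_AE) (auto elim!: eventually_mono simp: f_def)
  also have "\<dots> = (\<integral>\<omega>. h \<omega> * marg t \<omega> \<partial>M)"
    unfolding cond[symmetric] using marg_cond_exp[OF t] measurable_M[OF _ f(1)] t
    by (intro integral_cong_AE) (auto elim!: eventually_mono simp: f_def)
  finally show ?thesis .
qed

lemma marg_chain:
  assumes "1 \<le> t" "t \<le> T" "h \<in> borel_measurable (F t)" "ess_bounded M h"
  shows "(\<integral>\<omega>. h \<omega> * marg t \<omega> \<partial>M) = (\<integral>\<omega>. h \<omega> * marg T \<omega> \<partial>M)"
  using assms
proof (induction "T - t" arbitrary: t)
  case 0
  then show ?case by simp
next
  case (Suc m)
  then have "t < T" by auto
  then have "h \<in> borel_measurable (F (Suc t))" using measurable_mono[of t "Suc t"] Suc.prems by auto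
  then have "(\<integral>\<omega>. h \<omega> * marg (Suc t) \<omega> \<partial>M) = (\<integral>\<omega>. h \<omega> * marg T \<omega> \<partial>M)"
    using Suc.hyps Suc.prems \<open>t < T\<close> by auto
  then show ?case using marg_step[of t h] Suc.prems \<open>t < T\<close> by auto
qed

lemma bank_bounds: "\<exists>C. AE \<omega> in M. \<forall>t\<in>{1..T}. 1 \<le> bank r t \<omega> \<and> bank r t \<omega> \<le> C"
proof -
  obtain C where "\<forall>t\<in>{1..T}. AE \<omega> in M. 0 \<le> r t \<omega> \<and> r t \<omega> \<le> C" using r_bounded by auto
  then have "AE \<omega> in M. \<forall>k\<in>{1..T}. 0 \<le> r k \<omega> \<and> r k \<omega> \<le> C" by (intro AE_finite_allI) auto
  then have "AE \<omega> in M. \<forall>t\<in>{1..T}. 1 \<le> bank r t \<omega> \<and> bank r t \<omega> \<le> (1 + C) ^ T"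
  proof eventually_elim
    case (elim \<omega>)
    have "0 \<le> C" using elim T_pos by force
    show ?case
    proof
      fix t assume t: "t \<in> {1..T}"
      have "1 \<le> bank r t \<omega>" unfolding bank_def using elim t by (intro prod_ge_1) auto
      moreover have "bank r t \<omega> \<le> (\<Prod>k\<in>{1..t}. 1 + C)" unfolding bank_def using elim t
        by (intro prod_mono) auto
      moreover have "(\<Prod>k\<in>{1..t}. 1 + C) \<le> (1 + C) ^ T"
        using \<open>0 \<le> C\<close> t by (simp add: power_increasing)
      ultimately show "1 \<le> bank r t \<omega> \<and> bank r t \<omega> \<le> (1 + C) ^ T" by auto
    qed
  qed
  then show ?thesis by blast
qed

lemma bank_ge_one: "AE \<omega> in M. \<forall>t\<in>{1..T}. 1 \<le> bank r t \<omega>"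
  using bank_bounds by (auto elim!: eventually_mono)

lemma bank_bounded: "t \<in> {1..T} \<Longrightarrow> ess_bounded M (bank r t)"
proof -
  assume t: "t \<in> {1..T}"
  obtain C where "AE \<omega> in M. \<forall>t\<in>{1..T}. 1 \<le> bank r t \<omega> \<and> bank r t \<omega> \<le> C"
    using bank_bounds by blast
  then have "AE \<omega> in M. \<bar>bank r t \<omega>\<bar> \<le> C" by eventually_elim (use t in force)
  then show ?thesis by (rule ess_boundedI)
qed

lemma bank_measurable: "t \<in> {1..T} \<Longrightarrow> bank r t \<in> borel_measurable (F t)"
proof -
  assume t: "t \<in> {1..T}"
  have "r k \<in> borel_measurable (F t)" if "k \<in> {1..t}" for k
    using measurable_mono[of "k - 1" t "r k"] r_predictable that t by auto
  then have "(\<lambda>\<omega>. \<Prod>k\<in>{1..t}. 1 + r k \<omega>) \<in> borel_measurable (F t)" by measurable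
  then show ?thesis by (simp add: bank_def[abs_def])
qed

lemma disc_measurable:
  assumes "t \<in> {1..T}" and [measurable]: "Y t \<in> borel_measurable (F t)"
  shows "disc r Y t \<in> borel_measurable (F t)"
proof -
  have [measurable]: "bank r t \<in> borel_measurable (F t)" using bank_measurable assms(1) .
  show ?thesis unfolding disc_def[abs_def] by measurable
qed

lemma disc_bounded:
  assumes t: "t \<in> {1..T}" and Y: "ess_bounded M (Y t)"
  shows "ess_bounded M (disc r Y t)"
proof -
  obtain C where "AE \<omega> in M. \<bar>Y t \<omega>\<bar> \<le> C" using Y unfolding ess_bounded_def by blast
  with bank_ge_one have "AE \<omega> in M. \<bar>disc r Y t \<omega>\<bar> \<le> C"
  proof eventually_elim
    case (elim \<omega>)
    then have B: "1 \<le> bank r t \<omega>" using t by auto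
    then have "\<bar>disc r Y t \<omega>\<bar> \<le> \<bar>Y t \<omega>\<bar> / 1"
      unfolding disc_def abs_divide by (intro divide_left_mono) auto
    then show ?case using elim by simp
  qed
  then show ?thesis by (rule ess_boundedI)
qed

lemma adm_disc:
  assumes "Y \<in> adm M F T r W" "t \<in> {1..T}"
  shows "disc r Y t \<in> borel_measurable (F t)" "ess_bounded M (disc r Y t)"
  using assms disc_measurable disc_bounded unfolding adm_def Linf_iff by auto

definition opt_alloc :: "nat \<Rightarrow> 'a \<Rightarrow> real" where
  "opt_alloc t \<omega> = bank r t \<omega> * opt t \<omega>"

lemma disc_opt_alloc: "AE \<omega> in M. \<forall>t\<in>{1..T}. disc r opt_alloc t \<omega> = opt t \<omega>"
  using bank_ge_one by eventually_elim (force simp: disc_def opt_alloc_def)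

lemma opt_alloc_adm: "opt_alloc \<in> adm M F T r (\<lambda>\<omega>. x - Z \<omega>)"
  unfolding adm_def
proof (intro CollectI conjI ballI)
  fix t assume t: "t \<in> {1..T}"
  show meas: "opt_alloc t \<in> borel_measurable (F t)"
    using bank_measurable[OF t] opt_measurable[OF t] unfolding opt_alloc_def[abs_def] by measurable
  have "ess_bounded M (opt_alloc t)"
    unfolding opt_alloc_def using bank_bounded[OF t] opt_bounded[OF t] by (rule ess_bounded_mult)
  then show "Linf M (F T) (opt_alloc t)"
    unfolding Linf_iff using measurable_mono[OF _ _ meas] t by auto
next
  show "AE \<omega> in M. (\<Sum>t\<in>{1..T}. disc r opt_alloc t \<omega>) = x - Z \<omega>"
    using disc_opt_alloc
  proof eventually_elim
    case (elim \<omega>)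
    then have "(\<Sum>t\<in>{1..T}. disc r opt_alloc t \<omega>) = (\<Sum>t\<in>{1..T}. opt t \<omega>)" by (intro sum.cong) auto
    then show ?case using opt_budget by simp
  qed
qed

subsection \<open>Optimality and uniqueness\<close>

lemma utility_le_Uval:
  assumes "Y \<in> adm M F T r W"
  shows "(\<Sum>t\<in>{1..T}. integral\<^sup>L M (\<lambda>\<omega>. exp_util \<alpha> t (disc r Y t \<omega>))) \<le> Uval M F T r (exp_util \<alpha>) W"
  unfolding Uval_def
proof (rule cSup_upper)
  show "bdd_above {\<Sum>t\<in>{1..T}. integral\<^sup>L M (\<lambda>\<omega>. exp_util \<alpha> t (disc r Y t \<omega>)) |Y. Y \<in> adm M F T r W}"
    using integral_exp_util_le[OF prob_space_axioms, where \<alpha> = \<alpha>] alpha_pos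
    by (intro bdd_aboveI[where M = "\<Sum>t\<in>{1..T}. 1 / \<alpha> t"]) (auto intro!: sum_mono)
qed (use assms in blast)

lemma opt_utility_le_Uval:
  "(\<Sum>t\<in>{1..T}. integral\<^sup>L M (\<lambda>\<omega>. exp_util \<alpha> t (opt t \<omega>))) \<le> Uval M F T r (exp_util \<alpha>) (\<lambda>\<omega>. x - Z \<omega>)"
proof -
  have "integral\<^sup>L M (\<lambda>\<omega>. exp_util \<alpha> t (opt t \<omega>)) = integral\<^sup>L M (\<lambda>\<omega>. exp_util \<alpha> t (disc r opt_alloc t \<omega>))"
    if t: "t \<in> {1..T}" for t
    using disc_opt_alloc t measurable_M[OF _ opt_measurable[OF t]]
      measurable_M[OF _ adm_disc(1)[OF opt_alloc_adm t]]
    by (intro integral_cong_AE) (auto elim!: eventually_mono)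
  then show ?thesis using utility_le_Uval[OF opt_alloc_adm] by simp
qed

text \<open>Deviations from the candidate are orthogonal to marginal utility:
  sum_t E[(y_t - y*_t) D_t] = E[(sum_t y_t - sum_t y*_t) D_T] = 0.\<close>
lemma orthogonality:
  assumes Y: "Y \<in> adm M F T r (\<lambda>\<omega>. x - Z \<omega>)"
  shows "(\<Sum>t\<in>{1..T}. \<integral>\<omega>. (disc r Y t \<omega> - opt t \<omega>) * marg t \<omega> \<partial>M) = 0"
proof -
  let ?d = "\<lambda>t \<omega>. disc r Y t \<omega> - opt t \<omega>"
  have d: "?d t \<in> borel_measurable (F t)" "ess_bounded M (?d t)" if "t \<in> {1..T}" for t
    using adm_disc[OF Y that] opt_measurable[OF that] opt_bounded[OF that]
    by (auto intro: ess_bounded_diff)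
  have T: "T \<in> {1..T}" using T_pos by simp
  have int: "integrable M (\<lambda>\<omega>. ?d t \<omega> * marg T \<omega>)" if t: "t \<in> {1..T}" for t
    using d[OF t] measurable_mono[OF _ _ d(1)[OF t], of T] marg_measurable[OF T] marg_bounded[OF T] t
    by (intro integrable_adapted[of T] ess_bounded_mult) auto
  have "(\<Sum>t\<in>{1..T}. \<integral>\<omega>. ?d t \<omega> * marg t \<omega> \<partial>M) = (\<Sum>t\<in>{1..T}. \<integral>\<omega>. ?d t \<omega> * marg T \<omega> \<partial>M)"
    using d by (intro sum.cong refl marg_chain) auto
  also have "\<dots> = \<integral>\<omega>. (\<Sum>t\<in>{1..T}. ?d t \<omega>) * marg T \<omega> \<partial>M"
    using int by (simp add: sum_distrib_right)
  also have "\<dots> = \<integral>\<omega>. 0 \<partial>M"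
  proof (rule integral_cong_AE)
    show "(\<lambda>\<omega>. (\<Sum>t\<in>{1..T}. ?d t \<omega>) * marg T \<omega>) \<in> borel_measurable M"
      using int by (auto simp: sum_distrib_right)
    show "AE \<omega> in M. (\<Sum>t\<in>{1..T}. ?d t \<omega>) * marg T \<omega> = 0"
      using Y opt_budget unfolding adm_def by (auto elim!: eventually_mono simp: sum_subtractf)
  qed simp
  finally show ?thesis by simp
qed

definition tangent_gap :: "(nat \<Rightarrow> 'a \<Rightarrow> real) \<Rightarrow> nat \<Rightarrow> 'a \<Rightarrow> real" where
  "tangent_gap y t \<omega> = exp_util \<alpha> t (opt t \<omega>) + (y t \<omega> - opt t \<omega>) * marg t \<omega> - exp_util \<alpha> t (y t \<omega>)"

lemma tangent_gap_eq:
  "tangent_gap y t \<omega> = exp_util \<alpha> t (opt t \<omega>) + exp (- \<alpha> t * opt t \<omega>) * (y t \<omega> - opt t \<omega>) - exp_util \<alpha> t (y t \<omega>)"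
  unfolding tangent_gap_def marg_def by simp

lemma tangent_gap_nonneg: "t \<in> {1..T} \<Longrightarrow> 0 \<le> tangent_gap y t \<omega>"
  using exp_util_tangent(1)[where \<alpha> = \<alpha> and t = t and y = "y t \<omega>" and z = "opt t \<omega>"] alpha_pos
  unfolding tangent_gap_eq by force

lemma tangent_gap_zero: "t \<in> {1..T} \<Longrightarrow> tangent_gap y t \<omega> = 0 \<Longrightarrow> y t \<omega> = opt t \<omega>"
  using exp_util_tangent(2)[where \<alpha> = \<alpha> and t = t and y = "y t \<omega>" and z = "opt t \<omega>"] alpha_pos
  unfolding tangent_gap_eq by force

lemma integral_tangent_gap:
  assumes Y: "Y \<in> adm M F T r W" and t: "t \<in> {1..T}"
  shows "integrable M (tangent_gap (disc r Y) t)"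
    and "integral\<^sup>L M (tangent_gap (disc r Y) t) = integral\<^sup>L M (\<lambda>\<omega>. exp_util \<alpha> t (opt t \<omega>))
      + (\<integral>\<omega>. (disc r Y t \<omega> - opt t \<omega>) * marg t \<omega> \<partial>M) - integral\<^sup>L M (\<lambda>\<omega>. exp_util \<alpha> t (disc r Y t \<omega>))"
proof -
  have "integrable M (\<lambda>\<omega>. exp_util \<alpha> t (opt t \<omega>))" "integrable M (\<lambda>\<omega>. exp_util \<alpha> t (disc r Y t \<omega>))"
    "integrable M (\<lambda>\<omega>. (disc r Y t \<omega> - opt t \<omega>) * marg t \<omega>)"
    using adm_disc[OF Y t] opt_measurable[OF t] opt_bounded[OF t] marg_measurable[OF t] marg_bounded[OF t] t
    by (auto intro!: integrable_adapted[of t] ess_bounded_exp_util ess_bounded_mult ess_bounded_diff)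
  then show "integrable M (tangent_gap (disc r Y) t)"
    and "integral\<^sup>L M (tangent_gap (disc r Y) t) = integral\<^sup>L M (\<lambda>\<omega>. exp_util \<alpha> t (opt t \<omega>))
      + (\<integral>\<omega>. (disc r Y t \<omega> - opt t \<omega>) * marg t \<omega> \<partial>M) - integral\<^sup>L M (\<lambda>\<omega>. exp_util \<alpha> t (disc r Y t \<omega>))"
    unfolding tangent_gap_def[abs_def] by auto
qed

text \<open>Strict concavity: an admissible allocation doing at least as well as the candidate
  coincides with it almost surely, since its expected gaps are nonnegative with sum \<le> 0.\<close>
lemma unique_maximizer:
  assumes Y: "Y \<in> adm M F T r (\<lambda>\<omega>. x - Z \<omega>)"
    and better: "(\<Sum>t\<in>{1..T}. integral\<^sup>L M (\<lambda>\<omega>. exp_util \<alpha> t (opt t \<omega>)))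
      \<le> (\<Sum>t\<in>{1..T}. integral\<^sup>L M (\<lambda>\<omega>. exp_util \<alpha> t (disc r Y t \<omega>)))"
  shows "\<forall>t\<in>{1..T}. AE \<omega> in M. disc r Y t \<omega> = opt t \<omega>"
proof
  fix t assume t: "t \<in> {1..T}"
  let ?G = "\<lambda>t. integral\<^sup>L M (tangent_gap (disc r Y) t)"
  have "(\<Sum>t\<in>{1..T}. ?G t) \<le> 0"
    using better orthogonality[OF Y] integral_tangent_gap(2)[OF Y]
    by (simp add: sum.distrib sum_subtractf)
  moreover have "0 \<le> ?G s" if "s \<in> {1..T}" for s
    using tangent_gap_nonneg[OF that] by (intro integral_nonneg_AE) auto
  ultimately have "?G t = 0"
    using t sum_nonneg_eq_0_iff[of "{1..T}" ?G] by (metis antisym finite_atLeastAtMost sum_nonneg)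
  then have "AE \<omega> in M. tangent_gap (disc r Y) t \<omega> = 0"
    using integral_nonneg_eq_0_iff_AE[OF integral_tangent_gap(1)[OF Y t]] tangent_gap_nonneg[OF t] by auto
  then show "AE \<omega> in M. disc r Y t \<omega> = opt t \<omega>"
    by eventually_elim (rule tangent_gap_zero[OF t])
qed

lemma optimal_allocation:
  assumes X: "X \<in> adm M F T r (\<lambda>\<omega>. x - Z \<omega>)"
    and optimal: "(\<Sum>t\<in>{1..T}. integral\<^sup>L M (\<lambda>\<omega>. exp_util \<alpha> t (disc r X t \<omega>)))
      = Uval M F T r (exp_util \<alpha>) (\<lambda>\<omega>. x - Z \<omega>)"
  shows "\<forall>t\<in>{1..T}. AE \<omega> in M. X t \<omega> = bank r t \<omega> / \<alpha> t * (level t \<omega> - logL t \<omega>)"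
proof
  fix t assume t: "t \<in> {1..T}"
  have "AE \<omega> in M. disc r X t \<omega> = opt t \<omega>"
    using unique_maximizer[OF X] opt_utility_le_Uval optimal t by simp
  with bank_ge_one show "AE \<omega> in M. X t \<omega> = bank r t \<omega> / \<alpha> t * (level t \<omega> - logL t \<omega>)"
    by eventually_elim (use t in \<open>force simp: disc_def opt_def field_simps\<close>)
qed

end

theorem proposition3p5:
  fixes M :: "'a measure" and F :: "nat \<Rightarrow> 'a measure" and T :: nat
    and r :: "nat \<Rightarrow> 'a \<Rightarrow> real" and \<alpha> :: "nat \<Rightarrow> real"
    and x :: real and Z :: "'a \<Rightarrow> real" and X :: "nat \<Rightarrow> 'a \<Rightarrow> real"
  assumes "prob_space M"
    and "T \<ge> 1"
    and "filtration_upto M F T"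
    and "\<forall>t\<in>{1..T}. r t \<in> borel_measurable (F (t - 1))"
    and "\<exists>C. \<forall>t\<in>{1..T}. AE \<omega> in M. 0 \<le> r t \<omega> \<and> r t \<omega> \<le> C"
    and "\<forall>t\<in>{1..T}. \<alpha> t > 0"
    and "Linf M (F T) Z"
    and "X \<in> adm M F T r (\<lambda>\<omega>. x - Z \<omega>)"
    and "(\<Sum>t\<in>{1..T}. integral\<^sup>L M (\<lambda>\<omega>. exp_util \<alpha> t (disc r X t \<omega>)))
           = Uval M F T r (exp_util \<alpha>) (\<lambda>\<omega>. x - Z \<omega>)"
  shows "(AE \<omega> in M. X 1 \<omega> = bank r 1 \<omega> / \<alpha> 1 *
            (beta \<alpha> T 1 * x - ln (Lfun M F T \<alpha> (\<lambda>\<omega>. - Z \<omega>) 1 \<omega>)))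
    \<and> (\<forall>t\<in>{2..T}. AE \<omega> in M. X t \<omega> = bank r t \<omega> / \<alpha> t *
            (beta \<alpha> T 1 * x - ln (Lfun M F T \<alpha> (\<lambda>\<omega>. - Z \<omega>) t \<omega>)
             + (\<Sum>k\<in>{1..t-1}. beta \<alpha> T (k + 1) / \<alpha> k * ln (Lfun M F T \<alpha> (\<lambda>\<omega>. - Z \<omega>) k \<omega>))))"
proof -
  interpret exp_utility_model M F T r \<alpha> Z x
    unfolding exp_utility_model_def exp_utility_model_axioms_def using assms by auto
  have closed_form: "level t \<omega> - logL t \<omega> = beta \<alpha> T 1 * x - ln (Lfun M F T \<alpha> (\<lambda>\<omega>. - Z \<omega>) t \<omega>)
      + (\<Sum>k\<in>{1..t-1}. beta \<alpha> T (k + 1) / \<alpha> k * ln (Lfun M F T \<alpha> (\<lambda>\<omega>. - Z \<omega>) k \<omega>))" for t \<omega>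
    unfolding level_def logL_def L_def by simp
  have "1 \<in> {1..T}" using assms(2) by simp
  then show ?thesis
    using optimal_allocation[OF assms(8,9)] unfolding closed_form by fastforce
qed

end
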